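(* For every $d\in\mathbb{N}$, $n(d)\le m(d)+d$.
   Context: Unit vectors $x_1,\dots,x_n\in\mathbb{C}^d$ form a weighted $2$-design for $\mathbb{CP}^{d-1}$ if there exist weights $w_1,\dots,w_n\ge 0$ such that $\sum_{k=1}^n w_k (x_k^{\otimes 2})(x_k^{\otimes 2})^*$ equals the orthogonal projection of $(\mathbb{C}^d)^{\otimes 2}$ onto the subspace of symmetric tensors. $n(d)$ denotes the smallest $n$ such that there exist $n$ unit vectors in $\mathbb{C}^d$ forming a weighted $2$-design for $\mathbb{CP}^{d-1}$. A Sidon set is a subset $S$ of a finite abelian group $G$ such that $a+b=c+d$ with $a,b,c,d\in S$ implies $\{a,b\}=\{c,d\}$. $m(d)$ denotes the smallest order $|G|$ of a finite abelian group $G$ containing a Sidon set of size $d$. *)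

theory Defs
  imports Complex_Main "HOL-Algebra.Group"
begin

(* Vectors in C^d are functions nat => complex, only indices < d matter.
   A family of n vectors is x :: nat => nat => complex, x k = k-th vector (k < n). *)

definition unit_vec :: "nat \<Rightarrow> (nat \<Rightarrow> complex) \<Rightarrow> bool" where
  "unit_vec d v \<longleftrightarrow> (\<Sum>i<d. (cmod (v i))^2) = 1"

(* Entry ((i,j),(k,l)) of the orthogonal projection of (C^d)^{\<otimes>2} onto the
   symmetric tensors, in the standard basis e_i \<otimes> e_j: P_sym = (I + SWAP)/2. *)
definition sym_proj_entry :: "nat \<Rightarrow> nat \<Rightarrow> nat \<Rightarrow> nat \<Rightarrow> complex" where
  "sym_proj_entry i j k l =
     ((if i = k \<and> j = l then 1 else 0) + (if i = l \<and> j = k then 1 else 0)) / 2"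

(* x_0,...,x_{n-1} unit vectors in C^d forming a weighted 2-design:
   \<Sum>_k w_k (x_k\<otimes>x_k)(x_k\<otimes>x_k)^* = P_sym, compared entrywise. *)
definition weighted_2design :: "nat \<Rightarrow> nat \<Rightarrow> (nat \<Rightarrow> nat \<Rightarrow> complex) \<Rightarrow> bool" where
  "weighted_2design d n x \<longleftrightarrow>
     (\<forall>k<n. unit_vec d (x k)) \<and>
     (\<exists>w :: nat \<Rightarrow> real. (\<forall>k<n. w k \<ge> 0) \<and>
        (\<forall>i<d. \<forall>j<d. \<forall>i'<d. \<forall>j'<d.
           (\<Sum>k<n. complex_of_real (w k) * (x k i * x k j) * cnj (x k i' * x k j'))
             = sym_proj_entry i j i' j'))"

definition n_design :: "nat \<Rightarrow> nat" where
  "n_design d = (LEAST n. \<exists>x. weighted_2design d n x)"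

definition sidon :: "('a, 'b) monoid_scheme \<Rightarrow> 'a set \<Rightarrow> bool" where
  "sidon G S \<longleftrightarrow> S \<subseteq> carrier G \<and>
     (\<forall>a\<in>S. \<forall>b\<in>S. \<forall>c\<in>S. \<forall>e\<in>S.
        a \<otimes>\<^bsub>G\<^esub> b = c \<otimes>\<^bsub>G\<^esub> e \<longrightarrow> {a, b} = {c, e})"

(* Every finite group is isomorphic to one with carrier a subset of nat, so
   quantifying over groups with carrier type nat loses no generality. *)
definition m_sidon :: "nat \<Rightarrow> nat" where
  "m_sidon d = (LEAST N. \<exists>G :: nat monoid. comm_group G \<and> finite (carrier G) \<and>
       card (carrier G) = N \<and> (\<exists>S. sidon G S \<and> card S = d))"

end

theory Submission
  imports Defs "HOL-Algebra.Multiplicative_Group"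
begin

text \<open>
  Let \<open>s\<^sub>1, \<dots>, s\<^sub>d\<close> be a Sidon set in a finite abelian group \<open>G\<close> of order \<open>m\<close>.
  For each of the \<open>m\<close> characters \<open>\<chi>\<close> of \<open>G\<close> take the unit vector
  \<open>(\<chi>(s\<^sub>i) / \<surd>d)\<^sub>i\<close> with weight \<open>d\<^sup>2 / (2m)\<close>, and for each \<open>i\<close> the standard basis
  vector \<open>e\<^sub>i\<close> with weight \<open>1/2\<close>. By orthogonality of characters the character vectors
  contribute \<open>1/2\<close> to the entry \<open>((i,j),(i',j'))\<close> if \<open>s\<^sub>i s\<^sub>j = s\<^sub>i' s\<^sub>j'\<close> and \<open>0\<close>
  otherwise; by the Sidon property this happens iff \<open>{i,j} = {i',j'}\<close>. The basis vectors
  add the missing \<open>1/2\<close> when \<open>i = j = i' = j'\<close>, and the sum is the entry of \<open>(I + SWAP)/2\<close>.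

  The character theory needed (characters separate points, hence orthogonality, and there
  are exactly \<open>|G|\<close> of them) comes from extending a character \<open>\<chi>\<close> of a subgroup \<open>H\<close> to the
  subgroup generated by \<open>H\<close> and \<open>a\<close>: its value \<open>z\<close> at \<open>a\<close> only has to satisfy \<open>z\<^sup>k = \<chi>(a\<^sup>k)\<close>
  for the least \<open>k > 0\<close> with \<open>a\<^sup>k \<in> H\<close>.
\<close>

section \<open>Characters of finite abelian groups\<close>

lemma ex_root_unimodular:
  fixes w :: complex
  assumes "cmod w = 1" "0 < k"
  obtains z where "z ^ k = w"
proof
  have "cis (Arg w / real k) ^ k = cis (Arg w)"
    using assms(2) by (simp add: DeMoivre)
  also have "\<dots> = sgn w"
    using assms(1) by (intro cis_Arg) auto
  also have "\<dots> = w"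
    using assms(1) by (simp add: sgn_div_norm)
  finally show "cis (Arg w / real k) ^ k = w" .
qed

lemma norm_eq_1_if_norm_power_eq_1:
  fixes z :: complex
  assumes "cmod (z ^ k) = 1" "0 < k"
  shows "cmod z = 1"
  using assms power_eq_iff_eq_base[of k "cmod z" 1] by (simp add: norm_power)

lemma ex_nontrivial_root_unity:
  assumes "2 \<le> k"
  obtains z :: complex where "z ^ k = 1" "z \<noteq> 1"
proof -
  have "card {z::complex. z ^ k = 1} = k"
    using assms by (intro card_roots_unity_eq) simp
  moreover have "card {z::complex. z ^ k = 1} \<le> card {1::complex}"
    if "{z::complex. z ^ k = 1} \<subseteq> {1}"
    using that by (intro card_mono) auto
  ultimately have "\<not> {z::complex. z ^ k = 1} \<subseteq> {1}"
    using assms by auto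
  then show ?thesis using that by blast
qed

definition character_on :: "('a, 'b) monoid_scheme \<Rightarrow> 'a set \<Rightarrow> ('a \<Rightarrow> complex) \<Rightarrow> bool" where
  "character_on G H \<chi> \<longleftrightarrow>
     (\<forall>x\<in>H. \<forall>y\<in>H. \<chi> (x \<otimes>\<^bsub>G\<^esub> y) = \<chi> x * \<chi> y) \<and> (\<forall>x\<in>H. cmod (\<chi> x) = 1)"

definition characters :: "('a, 'b) monoid_scheme \<Rightarrow> ('a \<Rightarrow> complex) set" where
  "characters G = {\<chi> \<in> extensional (carrier G). character_on G (carrier G) \<chi>}"

context group
begin

lemma subgroup_nat_pow_closed:
  assumes "subgroup H G" "x \<in> H"
  shows "x [^] (n::nat) \<in> H"
  by (induction n) (use assms in \<open>auto simp: subgroup.one_closed subgroup.m_closed\<close>)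

lemma character_on_one:
  assumes "subgroup H G" "character_on G H \<chi>"
  shows "\<chi> \<one> = 1"
proof -
  have one: "\<one> \<in> H" using assms(1) by (rule subgroup.one_closed)
  then have "\<chi> \<one> * \<chi> \<one> = \<chi> \<one> * 1" "\<chi> \<one> \<noteq> 0"
    using assms(2) unfolding character_on_def by (metis l_one one_closed mult_1_right, force)
  then show ?thesis by (metis mult_left_cancel)
qed

lemma character_on_pow:
  assumes "subgroup H G" "character_on G H \<chi>" "x \<in> H"
  shows "\<chi> (x [^] (n::nat)) = \<chi> x ^ n"
proof (induction n)
  case 0
  then show ?case using character_on_one[OF assms(1,2)] by simp
next
  case (Suc n)
  have "\<chi> (x [^] Suc n) = \<chi> (x [^] n) * \<chi> x"
    using assms subgroup_nat_pow_closed[OF assms(1,3)] unfolding character_on_def by simp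
  then show ?case using Suc by simp
qed

lemma character_on_inv:
  assumes "subgroup H G" "character_on G H \<chi>" "x \<in> H"
  shows "\<chi> (inv x) = cnj (\<chi> x)"
proof -
  have "inv x \<in> H" "x \<in> carrier G"
    using assms by (auto simp: subgroup.m_inv_closed subgroup.mem_carrier)
  then have "\<chi> x * \<chi> (inv x) = 1"
    using assms character_on_one[OF assms(1,2)] unfolding character_on_def by (metis r_inv)
  moreover have "\<chi> x * cnj (\<chi> x) = 1"
    using assms(2,3) unfolding character_on_def by (metis complex_norm_square of_real_1 power_one)
  ultimately show ?thesis by (metis mult.left_commute mult_1_right)
qed

end

locale finite_comm_group = comm_group +
  assumes finite_carrier [simp]: "finite (carrier G)"
begin

lemma order_pos: "0 < order G"
  by (simp add: order_gt_0_iff_finite)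

lemma inv_eq_pow_order_minus_1:
  assumes "x \<in> carrier G"
  shows "inv x = x [^] (order G - 1)"
proof -
  have "x [^] (order G - 1) \<otimes> x = x [^] order G"
    using assms order_pos by (metis Suc_diff_1 nat_pow_Suc)
  then show ?thesis using assms by (simp add: pow_order_eq_1 inv_equality)
qed

definition rel_ord :: "'a set \<Rightarrow> 'a \<Rightarrow> nat" where
  "rel_ord H a = (LEAST k. 0 < k \<and> a [^] k \<in> H)"

lemma
  assumes "subgroup H G" "a \<in> carrier G"
  shows rel_ord_pos: "0 < rel_ord H a" and pow_rel_ord_mem: "a [^] rel_ord H a \<in> H"
proof -
  have "0 < order G \<and> a [^] order G \<in> H"
    using assms order_pos by (simp add: pow_order_eq_1 subgroup.one_closed)
  then have "0 < rel_ord H a \<and> a [^] rel_ord H a \<in> H"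
    unfolding rel_ord_def by (rule LeastI)
  then show "0 < rel_ord H a" "a [^] rel_ord H a \<in> H" by auto
qed

lemma rel_ord_dvd:
  assumes H: "subgroup H G" and a: "a \<in> carrier G" and n: "a [^] n \<in> H"
  shows "rel_ord H a dvd n"
proof -
  define k where "k = rel_ord H a"
  have "a [^] n = (a [^] k) [^] (n div k) \<otimes> a [^] (n mod k)"
    using a by (simp add: nat_pow_pow nat_pow_mult)
  then have "a [^] (n mod k) = inv ((a [^] k) [^] (n div k)) \<otimes> a [^] n"
    using a by (simp add: inv_solve_left)
  also have "\<dots> \<in> H"
    using rel_ord_pos[OF H a] pow_rel_ord_mem[OF H a] H n unfolding k_def
    by (simp add: subgroup_nat_pow_closed subgroup.m_inv_closed subgroup.m_closed)
  finally have "a [^] (n mod k) \<in> H" .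
  moreover have "n mod k < k" using rel_ord_pos[OF H a] unfolding k_def by simp
  ultimately have "n mod k = 0"
    using not_less_Least[of "n mod k" "\<lambda>k. 0 < k \<and> a [^] k \<in> H"] unfolding k_def rel_ord_def by auto
  then show ?thesis unfolding k_def by auto
qed

definition adjoin :: "'a set \<Rightarrow> 'a \<Rightarrow> 'a set" where
  "adjoin H a = {h \<otimes> a [^] (j::nat) | h j. h \<in> H}"

lemma adjoin_mult:
  assumes "h \<in> carrier G" "h' \<in> carrier G" "a \<in> carrier G"
  shows "(h \<otimes> a [^] (j::nat)) \<otimes> (h' \<otimes> a [^] (j'::nat)) = (h \<otimes> h') \<otimes> a [^] (j + j')"
proof -
  have "(h \<otimes> a [^] j) \<otimes> (h' \<otimes> a [^] j') = (h \<otimes> h') \<otimes> (a [^] j \<otimes> a [^] j')"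
    using assms by (simp add: m_ac)
  then show ?thesis using assms by (simp add: nat_pow_mult)
qed

lemma subgroup_adjoin:
  assumes H: "subgroup H G" and a: "a \<in> carrier G"
  shows "subgroup (adjoin H a) G"
proof (rule subgroupI)
  show "adjoin H a \<subseteq> carrier G" "adjoin H a \<noteq> {}"
    using H a subgroup.one_closed[OF H] by (auto simp: adjoin_def subgroup.mem_carrier)
next
  fix x assume "x \<in> adjoin H a"
  then obtain h and j :: nat where x: "x = h \<otimes> a [^] j" "h \<in> H" unfolding adjoin_def by blast
  moreover have "inv (a [^] j) = a [^] (j * (order G - 1))"
    using a by (simp add: inv_eq_pow_order_minus_1 nat_pow_pow)
  ultimately have "inv x = inv h \<otimes> a [^] (j * (order G - 1))"
    using H a by (simp add: inv_mult subgroup.mem_carrier)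
  then show "inv x \<in> adjoin H a"
    using H x unfolding adjoin_def by (blast intro: subgroup.m_inv_closed)
next
  fix x y assume "x \<in> adjoin H a" "y \<in> adjoin H a"
  then obtain h h' and j j' :: nat
    where "x = h \<otimes> a [^] j" "h \<in> H" "y = h' \<otimes> a [^] j'" "h' \<in> H"
    unfolding adjoin_def by blast
  moreover from this have "x \<otimes> y = (h \<otimes> h') \<otimes> a [^] (j + j')"
    using H a by (simp add: adjoin_mult subgroup.mem_carrier)
  ultimately show "x \<otimes> y \<in> adjoin H a"
    using H unfolding adjoin_def by (blast intro: subgroup.m_closed)
qed

lemma adjoin_subset:
  assumes "subgroup H G" "a \<in> carrier G"
  shows "H \<subseteq> adjoin H a" "a \<in> adjoin H a"
proof -
  show "H \<subseteq> adjoin H a"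
    using assms unfolding adjoin_def by (force dest: subgroup.mem_carrier intro: exI[of _ 0])
  have "a = \<one> \<otimes> a [^] (1::nat)" using assms(2) by simp
  then show "a \<in> adjoin H a"
    using subgroup.one_closed[OF assms(1)] unfolding adjoin_def by blast
qed

lemma character_on_adjoin_consistent:
  assumes H: "subgroup H G" and \<chi>: "character_on G H \<chi>" and a: "a \<in> carrier G"
    and z: "z ^ rel_ord H a = \<chi> (a [^] rel_ord H a)"
    and h: "h \<in> H" "h' \<in> H" and eq: "h \<otimes> a [^] i = h' \<otimes> a [^] j"
  shows "\<chi> h * z ^ i = \<chi> h' * z ^ j"
proof -
  have shift: "\<chi> h = \<chi> h' * z ^ n"
    if h: "h \<in> H" "h' \<in> H" and eq: "h \<otimes> a [^] i = h' \<otimes> a [^] (n + i)" for h h' i n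
  proof -
    have hG: "h \<in> carrier G" "h' \<in> carrier G" using h H by (auto dest: subgroup.mem_carrier)
    have "h \<otimes> a [^] i = (h' \<otimes> a [^] n) \<otimes> a [^] i"
      using eq a hG by (simp add: nat_pow_mult m_assoc)
    then have h_eq: "h = h' \<otimes> a [^] n"
      using a hG by simp
    then have "a [^] n = inv h' \<otimes> h"
      using a hG by (simp add: inv_solve_left)
    then have "a [^] n \<in> H"
      using H h by (simp add: subgroup.m_inv_closed subgroup.m_closed)
    then obtain q where q: "n = rel_ord H a * q"
      using rel_ord_dvd[OF H a] by blast
    have "\<chi> (a [^] n) = \<chi> ((a [^] rel_ord H a) [^] q)"
      using a by (simp add: q nat_pow_pow)
    also have "\<dots> = z ^ n"
      using character_on_pow[OF H \<chi> pow_rel_ord_mem[OF H a]] z by (simp add: q power_mult)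
    finally show ?thesis
      using \<chi> h h_eq \<open>a [^] n \<in> H\<close> unfolding character_on_def by simp
  qed
  show ?thesis
  proof (cases "i \<le> j")
    case True
    then have "\<chi> h = \<chi> h' * z ^ (j - i)"
      using shift[OF h, of i "j - i"] eq by simp
    then show ?thesis using True by (simp add: mult.assoc flip: power_add)
  next
    case False
    then have "\<chi> h' = \<chi> h * z ^ (i - j)"
      using shift[OF h(2,1), of j "i - j"] eq by simp
    then show ?thesis using False by (simp add: mult.assoc flip: power_add)
  qed
qed

lemma character_on_adjoin:
  assumes H: "subgroup H G" and \<chi>: "character_on G H \<chi>" and a: "a \<in> carrier G"
    and z: "z ^ rel_ord H a = \<chi> (a [^] rel_ord H a)"
  obtains \<psi> where "character_on G (adjoin H a) \<psi>" "\<forall>x\<in>H. \<psi> x = \<chi> x" "\<psi> a = z"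
proof
  define \<psi> where "\<psi> x = (SOME v. \<exists>h\<in>H. \<exists>j::nat. x = h \<otimes> a [^] j \<and> v = \<chi> h * z ^ j)" for x
  have \<psi>: "\<psi> (h \<otimes> a [^] j) = \<chi> h * z ^ j" if "h \<in> H" for h j
    unfolding \<psi>_def
    by (rule someI2[where a="\<chi> h * z ^ j"])
       (use that in blast, use that character_on_adjoin_consistent[OF H \<chi> a z] in metis)
  have "cmod z = 1"
    using \<chi> rel_ord_pos[OF H a] pow_rel_ord_mem[OF H a] z unfolding character_on_def
    by (metis norm_eq_1_if_norm_power_eq_1)
  then show "character_on G (adjoin H a) \<psi>"
    unfolding character_on_def
  proof (intro conjI ballI)
    fix x y assume "x \<in> adjoin H a" "y \<in> adjoin H a"
    then obtain h h' and j j' :: nat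
      where x: "x = h \<otimes> a [^] j" "h \<in> H" and y: "y = h' \<otimes> a [^] j'" "h' \<in> H"
      unfolding adjoin_def by blast
    then have "x \<otimes> y = (h \<otimes> h') \<otimes> a [^] (j + j')"
      using H a by (simp add: adjoin_mult subgroup.mem_carrier)
    then show "\<psi> (x \<otimes> y) = \<psi> x * \<psi> y"
      using \<psi> x y \<chi> H unfolding character_on_def by (simp add: subgroup.m_closed power_add)
  next
    fix x assume "x \<in> adjoin H a"
    then obtain h and j :: nat where "x = h \<otimes> a [^] j" "h \<in> H"
      unfolding adjoin_def by blast
    then show "cmod (\<psi> x) = 1"
      using \<psi> \<chi> \<open>cmod z = 1\<close> unfolding character_on_def by (simp add: norm_mult norm_power)
  qed
  show "\<forall>x\<in>H. \<psi> x = \<chi> x"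
    using \<psi>[of _ 0] H by (simp add: subgroup.mem_carrier)
  show "\<psi> a = z"
    using \<psi>[of \<one> 1] a subgroup.one_closed[OF H] character_on_one[OF H \<chi>] by simp
qed

lemma character_on_extend:
  assumes "subgroup H G" "character_on G H \<chi>"
  shows "\<exists>\<psi>. character_on G (carrier G) \<psi> \<and> (\<forall>x\<in>H. \<psi> x = \<chi> x)"
  using assms
proof (induction "card (carrier G) - card H" arbitrary: H \<chi> rule: less_induct)
  case less
  show ?case
  proof (cases "H = carrier G")
    case True
    then show ?thesis using less.prems by blast
  next
    case False
    then obtain a where a: "a \<in> carrier G" "a \<notin> H"
      using less.prems(1) subgroup.subset by blast
    obtain z where "z ^ rel_ord H a = \<chi> (a [^] rel_ord H a)"
      using ex_root_unimodular rel_ord_pos[OF less.prems(1) a(1)] pow_rel_ord_mem[OF less.prems(1) a(1)]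
        less.prems(2)
      unfolding character_on_def by metis
    then obtain \<psi> where \<psi>: "character_on G (adjoin H a) \<psi>" "\<forall>x\<in>H. \<psi> x = \<chi> x"
      using character_on_adjoin[OF less.prems a(1)] by metis
    have sub: "subgroup (adjoin H a) G" "H \<subset> adjoin H a"
      using subgroup_adjoin[OF less.prems(1) a(1)] adjoin_subset[OF less.prems(1) a(1)] a(2)
      by auto
    have "adjoin H a \<subseteq> carrier G"
      using sub(1) by (rule subgroup.subset)
    then have "card H < card (adjoin H a)" "card (adjoin H a) \<le> card (carrier G)"
      using psubset_card_mono[OF finite_subset sub(2)] card_mono[OF finite_carrier] by auto
    then have "card (carrier G) - card (adjoin H a) < card (carrier G) - card H"
      by linarith
    then obtain \<phi> where \<phi>: "character_on G (carrier G) \<phi>" "\<forall>x\<in>adjoin H a. \<phi> x = \<psi> x"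
      using less.hyps sub(1) \<psi>(1) by blast
    have "\<forall>x\<in>H. \<phi> x = \<chi> x"
      using \<phi>(2) \<psi>(2) sub(2) by auto
    then show ?thesis using \<phi>(1) by blast
  qed
qed

lemma character_separates:
  assumes g: "g \<in> carrier G" "g \<noteq> \<one>"
  obtains \<psi> where "character_on G (carrier G) \<psi>" "\<psi> g \<noteq> 1"
proof -
  have triv: "subgroup {\<one>} G" "character_on G {\<one>} (\<lambda>_. 1)"
    by (auto simp: triv_subgroup character_on_def)
  define k where "k = rel_ord {\<one>} g"
  have "k \<noteq> 1"
    using pow_rel_ord_mem[OF triv(1) g(1)] g unfolding k_def by auto
  then have "2 \<le> k"
    using rel_ord_pos[OF triv(1) g(1)] unfolding k_def by linarith
  then obtain z :: complex where z: "z ^ k = 1" "z \<noteq> 1"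
    using ex_nontrivial_root_unity by blast
  then obtain \<psi> where \<psi>: "character_on G (adjoin {\<one>} g) \<psi>" "\<psi> g = z"
    using character_on_adjoin[OF triv g(1), of z] unfolding k_def by auto
  then obtain \<phi> where "character_on G (carrier G) \<phi>" "\<forall>x\<in>adjoin {\<one>} g. \<phi> x = \<psi> x"
    using character_on_extend subgroup_adjoin[OF triv(1) g(1)] by blast
  then show ?thesis
    using that adjoin_subset(2)[OF triv(1) g(1)] \<psi>(2) z(2) by auto
qed

lemma restrict_in_characters:
  "character_on G (carrier G) \<chi> \<Longrightarrow> restrict \<chi> (carrier G) \<in> characters G"
  unfolding characters_def character_on_def by simp

lemma characters_mult:
  "\<chi> \<in> characters G \<Longrightarrow> x \<in> carrier G \<Longrightarrow> y \<in> carrier G \<Longrightarrow> \<chi> (x \<otimes> y) = \<chi> x * \<chi> y"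
  unfolding characters_def character_on_def by blast

lemma characters_norm: "\<chi> \<in> characters G \<Longrightarrow> x \<in> carrier G \<Longrightarrow> cmod (\<chi> x) = 1"
  unfolding characters_def character_on_def by blast

lemma characters_one: "\<chi> \<in> characters G \<Longrightarrow> \<chi> \<one> = 1"
  unfolding characters_def using character_on_one[OF subgroup_self] by blast

lemma characters_inv: "\<chi> \<in> characters G \<Longrightarrow> x \<in> carrier G \<Longrightarrow> \<chi> (inv x) = cnj (\<chi> x)"
  unfolding characters_def using character_on_inv[OF subgroup_self] by blast

lemma characters_mult_closed:
  "\<chi> \<in> characters G \<Longrightarrow> \<psi> \<in> characters G \<Longrightarrow> restrict (\<lambda>x. \<chi> x * \<psi> x) (carrier G) \<in> characters G"
  unfolding characters_def character_on_def by (auto simp: norm_mult)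

lemma finite_characters: "finite (characters G)"
proof (rule finite_subset)
  show "characters G \<subseteq> (\<Pi>\<^sub>E x\<in>carrier G. {z. z ^ order G = 1})"
  proof
    fix \<chi> assume \<chi>: "\<chi> \<in> characters G"
    have "\<chi> x ^ order G = 1" if "x \<in> carrier G" for x
      using \<chi> that character_on_pow[OF subgroup_self, of \<chi> x "order G"]
      by (simp add: characters_def pow_order_eq_1 characters_one)
    then show "\<chi> \<in> (\<Pi>\<^sub>E x\<in>carrier G. {z. z ^ order G = 1})"
      using \<chi> by (auto simp: characters_def extensional_def)
  qed
  show "finite (\<Pi>\<^sub>E x\<in>carrier G. {z::complex. z ^ order G = 1})"
    using order_pos by (intro finite_PiE finite_roots_unity finite_carrier) auto
qed

lemma sum_character_eq_0:
  assumes \<chi>: "\<chi> \<in> characters G" and y: "y \<in> carrier G" "\<chi> y \<noteq> 1"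
  shows "(\<Sum>g\<in>carrier G. \<chi> g) = 0"
proof -
  have "(\<Sum>g\<in>carrier G. \<chi> g) = (\<Sum>g\<in>carrier G. \<chi> (y \<otimes> g))"
    by (rule sum.reindex_bij_witness[where j="\<lambda>g. inv y \<otimes> g" and i="\<lambda>g. y \<otimes> g"])
       (use y in \<open>auto simp: m_assoc[symmetric]\<close>)
  also have "\<dots> = \<chi> y * (\<Sum>g\<in>carrier G. \<chi> g)"
    using characters_mult[OF \<chi> y(1)] by (simp add: sum_distrib_left)
  finally show ?thesis using y(2) by (metis mult_cancel_right1)
qed

lemma sum_characters_eq_0:
  assumes g: "g \<in> carrier G" "g \<noteq> \<one>"
  shows "(\<Sum>\<chi>\<in>characters G. \<chi> g) = 0"
proof -
  obtain \<psi> where "character_on G (carrier G) \<psi>" "\<psi> g \<noteq> 1"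
    using character_separates[OF g] .
  then have \<psi>: "restrict \<psi> (carrier G) \<in> characters G" "restrict \<psi> (carrier G) g \<noteq> 1"
    using g(1) by (auto simp: restrict_in_characters)
  \<comment> \<open>multiplying by \<open>\<psi>\<close> permutes the characters\<close>
  define T where "T \<chi> = restrict (\<lambda>x. restrict \<psi> (carrier G) x * \<chi> x) (carrier G)" for \<chi>
  have T_into: "T ` characters G \<subseteq> characters G"
    unfolding T_def by (intro image_subsetI characters_mult_closed[OF \<psi>(1)])
  have "inj_on T (characters G)"
  proof (rule inj_onI)
    fix \<chi> \<chi>' assume \<chi>: "\<chi> \<in> characters G" "\<chi>' \<in> characters G" and eq: "T \<chi> = T \<chi>'"
    show "\<chi> = \<chi>'"
    proof (rule extensionalityI)
      show "\<chi> \<in> extensional (carrier G)" "\<chi>' \<in> extensional (carrier G)"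
        using \<chi> by (simp_all add: characters_def)
    next
      fix x assume x: "x \<in> carrier G"
      have "\<psi> x * \<chi> x = \<psi> x * \<chi>' x"
        using fun_cong[OF eq, of x] x by (simp add: T_def)
      moreover have "\<psi> x \<noteq> 0"
        using characters_norm[OF \<psi>(1) x] x by auto
      ultimately show "\<chi> x = \<chi>' x" by simp
    qed
  qed
  then have "(\<Sum>\<chi>\<in>characters G. \<chi> g) = (\<Sum>\<chi>\<in>characters G. T \<chi> g)"
    using endo_inj_surj[OF finite_characters T_into] sum.reindex[of T "characters G" "\<lambda>\<chi>. \<chi> g"]
    by simp
  also have "\<dots> = \<psi> g * (\<Sum>\<chi>\<in>characters G. \<chi> g)"
    using g(1) by (simp add: T_def sum_distrib_left)
  finally show ?thesis using \<psi>(2) g(1) by (metis mult_cancel_right1 restrict_apply')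
qed

lemma card_characters: "card (characters G) = order G"
proof -
  define triv where "triv = restrict (\<lambda>_. 1 :: complex) (carrier G)"
  have triv: "triv \<in> characters G"
    unfolding triv_def characters_def character_on_def by simp
  have sum_group: "(\<Sum>g\<in>carrier G. \<chi> g) = (if \<chi> = triv then of_nat (order G) else 0)"
    if \<chi>: "\<chi> \<in> characters G" for \<chi>
  proof (cases "\<forall>y\<in>carrier G. \<chi> y = 1")
    case True
    then have "\<chi> = triv"
      using \<chi> unfolding characters_def triv_def by (auto intro: extensionalityI)
    then show ?thesis by (simp add: triv_def order_def)
  next
    case False
    then show ?thesis using \<chi> sum_character_eq_0 by (auto simp: triv_def)
  qed
  have sum_one: "(\<Sum>\<chi>\<in>characters G. \<chi> \<one>) = of_nat (card (characters G))"
    by (simp add: characters_one)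
  have "(of_nat (card (characters G)) :: complex)
      = (\<Sum>g\<in>carrier G. if g = \<one> then of_nat (card (characters G)) else 0)"
    by (simp add: sum.delta)
  also have "\<dots> = (\<Sum>g\<in>carrier G. \<Sum>\<chi>\<in>characters G. \<chi> g)"
    by (rule sum.cong) (auto simp: sum_characters_eq_0 sum_one)
  also have "\<dots> = (\<Sum>\<chi>\<in>characters G. \<Sum>g\<in>carrier G. \<chi> g)"
    by (rule sum.swap)
  also have "\<dots> = (\<Sum>\<chi>\<in>characters G. if \<chi> = triv then of_nat (order G) else 0)"
    using sum_group by (rule sum.cong[OF refl])
  also have "\<dots> = of_nat (order G)"
    using finite_characters triv by simp
  finally show ?thesis
    by (simp only: of_nat_eq_iff)
qed

lemma sum_characters:
  "u \<in> carrier G \<Longrightarrow> (\<Sum>\<chi>\<in>characters G. \<chi> u) = (if u = \<one> then of_nat (order G) else 0)"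
  by (simp add: sum_characters_eq_0 characters_one card_characters)

lemma sum_characters_mult_cnj:
  assumes "a \<in> carrier G" "b \<in> carrier G" "a' \<in> carrier G" "b' \<in> carrier G"
  shows "(\<Sum>\<chi>\<in>characters G. \<chi> a * \<chi> b * cnj (\<chi> a' * \<chi> b'))
    = (if a \<otimes> b = a' \<otimes> b' then of_nat (order G) else 0)"
proof -
  have "(\<Sum>\<chi>\<in>characters G. \<chi> a * \<chi> b * cnj (\<chi> a' * \<chi> b'))
      = (\<Sum>\<chi>\<in>characters G. \<chi> (a \<otimes> b \<otimes> inv (a' \<otimes> b')))"
    using assms by (intro sum.cong) (simp_all add: characters_mult characters_inv)
  also have "\<dots> = (if a \<otimes> b \<otimes> inv (a' \<otimes> b') = \<one> then of_nat (order G) else 0)"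
    using assms by (intro sum_characters) simp
  also have "a \<otimes> b \<otimes> inv (a' \<otimes> b') = \<one> \<longleftrightarrow> a \<otimes> b = a' \<otimes> b'"
    using assms by (metis inv_closed inv_equality inv_inv m_closed r_inv)
  finally show ?thesis .
qed

end

section \<open>Sidon sets\<close>

lemma (in comm_group) sidon_mult_eq_iff:
  assumes S: "sidon G S" and s: "inj_on s {..<d}" "s ` {..<d} \<subseteq> S"
    and ij: "i < d" "j < d" "i' < d" "j' < d"
  shows "s i \<otimes> s j = s i' \<otimes> s j' \<longleftrightarrow> (i = i' \<and> j = j') \<or> (i = j' \<and> j = i')"
proof
  assume "s i \<otimes> s j = s i' \<otimes> s j'"
  then have "{s i, s j} = {s i', s j'}"
    using S s(2) ij unfolding sidon_def by (simp add: image_subset_iff)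
  then show "(i = i' \<and> j = j') \<or> (i = j' \<and> j = i')"
    using inj_onD[OF s(1)] ij by (auto simp: doubleton_eq_iff)
next
  have "s i \<in> carrier G" "s j \<in> carrier G"
    using S s(2) ij unfolding sidon_def by auto
  then show "s i \<otimes> s j = s i' \<otimes> s j'" if "(i = i' \<and> j = j') \<or> (i = j' \<and> j = i')"
    using that m_comm by auto
qed

definition nat_mod_group :: "nat \<Rightarrow> nat monoid" where
  "nat_mod_group N = \<lparr>carrier = {..<N}, mult = (\<lambda>x y. (x + y) mod N), one = 0\<rparr>"

lemma comm_group_nat_mod_group:
  assumes "0 < N"
  shows "comm_group (nat_mod_group N)"
proof (rule comm_groupI)
  fix x assume x: "x \<in> carrier (nat_mod_group N)"
  show "\<exists>y\<in>carrier (nat_mod_group N). y \<otimes>\<^bsub>nat_mod_group N\<^esub> x = \<one>\<^bsub>nat_mod_group N\<^esub>"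
    using assms x by (intro bexI[of _ "(N - x) mod N"]) (auto simp: nat_mod_group_def mod_add_left_eq)
qed (use assms in \<open>auto simp: nat_mod_group_def mod_add_left_eq mod_add_right_eq ac_simps\<close>)

lemma bits_pow2_add_pow2:
  "{n. bit ((2::nat) ^ a + 2 ^ b) n} = (if a = b then {Suc a} else {a, b})"
proof (cases "a = b")
  case True
  then show ?thesis by (simp add: bit_exp_iff flip: mult_2 power_Suc)
next
  case False
  then have "(2::nat) ^ a + 2 ^ b = or (2 ^ a) (2 ^ b)"
    by (intro disjunctive_add) (auto simp: bit_exp_iff)
  then show ?thesis using False by (auto simp: bit_or_iff bit_exp_iff)
qed

lemma pow2_add_pow2_inject:
  assumes "(2::nat) ^ a + 2 ^ b = 2 ^ c + 2 ^ e"
  shows "{a, b} = {c, e}"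
  using bits_pow2_add_pow2[of a b] bits_pow2_add_pow2[of c e]
  unfolding assms by (auto split: if_splits simp: doubleton_eq_iff)

lemma sidon_powers_of_two:
  "sidon (nat_mod_group (2 ^ Suc d)) ((\<lambda>i. 2 ^ i) ` {..<d})"
  unfolding sidon_def
proof (intro conjI ballI impI)
  have "(2::nat) ^ i < 2 ^ Suc d" if "i < d" for i
    using that by (intro power_strict_increasing) simp_all
  then show "(\<lambda>i. 2 ^ i) ` {..<d} \<subseteq> carrier (nat_mod_group (2 ^ Suc d))"
    by (auto simp: nat_mod_group_def)
next
  fix a b c e assume mem: "a \<in> (\<lambda>i. 2 ^ i) ` {..<d}" "b \<in> (\<lambda>i. 2 ^ i) ` {..<d}"
    "c \<in> (\<lambda>i. 2 ^ i) ` {..<d}" "e \<in> (\<lambda>i. 2 ^ i) ` {..<d}"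
    and eq: "a \<otimes>\<^bsub>nat_mod_group (2 ^ Suc d)\<^esub> b = c \<otimes>\<^bsub>nat_mod_group (2 ^ Suc d)\<^esub> e"
  obtain ia ib ic ie where "ia < d" "ib < d" "ic < d" "ie < d"
    and pow: "a = 2 ^ ia" "b = 2 ^ ib" "c = 2 ^ ic" "e = 2 ^ ie"
    using mem by blast
  then have "a < 2 ^ d" "b < 2 ^ d" "c < 2 ^ d" "e < 2 ^ d"
    by (simp_all add: power_strict_increasing)
  then have "a + b < 2 ^ Suc d" "c + e < 2 ^ Suc d"
    by simp_all
  then have "2 ^ ia + 2 ^ ib = (2::nat) ^ ic + 2 ^ ie"
    using eq pow by (simp add: nat_mod_group_def)
  then have "{ia, ib} = {ic, ie}"
    by (rule pow2_add_pow2_inject)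
  then show "{a, b} = {c, e}"
    unfolding pow by (metis image_empty image_insert)
qed

lemma m_sidon_attained:
  "\<exists>G :: nat monoid. comm_group G \<and> finite (carrier G) \<and> card (carrier G) = m_sidon d \<and>
     (\<exists>S. sidon G S \<and> card S = d)"
proof -
  have "card ((\<lambda>i. (2::nat) ^ i) ` {..<d}) = d"
    by (simp add: card_image inj_on_def)
  then have "\<exists>G :: nat monoid. comm_group G \<and> finite (carrier G) \<and>
      card (carrier G) = 2 ^ Suc d \<and> (\<exists>S. sidon G S \<and> card S = d)"
    using comm_group_nat_mod_group sidon_powers_of_two
    by (intro exI[of _ "nat_mod_group (2 ^ Suc d)"]) (auto simp: nat_mod_group_def)
  then show ?thesis
    unfolding m_sidon_def by (rule LeastI)
qed

section \<open>Weighted 2-designs from Sidon sets\<close>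

definition tensor_frame_entry ::
    "nat \<Rightarrow> (nat \<Rightarrow> real) \<Rightarrow> (nat \<Rightarrow> nat \<Rightarrow> complex) \<Rightarrow> nat \<Rightarrow> nat \<Rightarrow> nat \<Rightarrow> nat \<Rightarrow> complex" where
  "tensor_frame_entry n w x i j i' j' =
     (\<Sum>k<n. complex_of_real (w k) * (x k i * x k j) * cnj (x k i' * x k j'))"

lemma weighted_2designI:
  assumes "\<And>k. k < n \<Longrightarrow> unit_vec d (x k)" "\<And>k. k < n \<Longrightarrow> 0 \<le> w k"
    and "\<And>i j i' j'. i < d \<Longrightarrow> j < d \<Longrightarrow> i' < d \<Longrightarrow> j' < d \<Longrightarrow>
           tensor_frame_entry n w x i j i' j' = sym_proj_entry i j i' j'"
  shows "weighted_2design d n x"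
  using assms unfolding weighted_2design_def tensor_frame_entry_def by blast

lemma tensor_frame_entry_cong:
  assumes "\<And>k. k < n \<Longrightarrow> w k = w' k" "\<And>k. k < n \<Longrightarrow> x k = x' k"
  shows "tensor_frame_entry n w x i j i' j' = tensor_frame_entry n w' x' i j i' j'"
  using assms unfolding tensor_frame_entry_def by simp

lemma tensor_frame_entry_add:
  "tensor_frame_entry (m + n) w x i j i' j' =
     tensor_frame_entry m w x i j i' j' +
     tensor_frame_entry n (\<lambda>k. w (m + k)) (\<lambda>k. x (m + k)) i j i' j'"
  unfolding tensor_frame_entry_def by (induction n) (simp_all add: add.assoc)

definition basis_vec :: "nat \<Rightarrow> nat \<Rightarrow> complex" where
  "basis_vec t i = (if i = t then 1 else 0)"

lemma unit_vec_basis_vec: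
  assumes "t < d"
  shows "unit_vec d (basis_vec t)"
proof -
  have "(cmod (basis_vec t i))\<^sup>2 = (if i = t then 1 else 0)" for i
    by (simp add: basis_vec_def)
  then show ?thesis
    unfolding unit_vec_def using assms by simp
qed

lemma tensor_frame_entry_basis:
  assumes "i < d"
  shows "tensor_frame_entry d (\<lambda>_. 1/2) basis_vec i j i' j'
    = (if j = i \<and> i' = i \<and> j' = i then 1/2 else 0)"
proof -
  have "tensor_frame_entry d (\<lambda>_. 1/2) basis_vec i j i' j'
      = (\<Sum>k<d. if k = i then (if j = i \<and> i' = i \<and> j' = i then 1/2 else 0) else 0)"
    unfolding tensor_frame_entry_def basis_vec_def by (intro sum.cong) auto
  then show ?thesis using assms by simp
qed

lemma sym_proj_entry_split:
  "sym_proj_entry i j i' j' =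
     (if (i = i' \<and> j = j') \<or> (i = j' \<and> j = i') then 1/2 else 0) +
     (if j = i \<and> i' = i \<and> j' = i then 1/2 else 0)"
  unfolding sym_proj_entry_def
  by (cases "i = i'"; cases "j = j'"; cases "i = j'"; cases "j = i'") simp_all

context finite_comm_group
begin

lemma unit_vec_character_vector:
  assumes \<chi>: "\<chi> \<in> characters G" and s: "\<And>i. i < d \<Longrightarrow> s i \<in> carrier G" and d: "0 < d"
  shows "unit_vec d (\<lambda>i. \<chi> (s i) / complex_of_real (sqrt (real d)))"
proof -
  have "(cmod (\<chi> (s i) / complex_of_real (sqrt (real d))))\<^sup>2 = 1 / real d" if "i < d" for i
    using characters_norm[OF \<chi> s[OF that]] by (simp add: norm_divide power_divide)
  then show ?thesis
    unfolding unit_vec_def using d by simp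
qed

lemma tensor_frame_entry_characters:
  assumes e: "bij_betw e {..<order G} (characters G)" and d: "0 < d"
    and s: "s i \<in> carrier G" "s j \<in> carrier G" "s i' \<in> carrier G" "s j' \<in> carrier G"
  shows "tensor_frame_entry (order G) (\<lambda>_. (real d)\<^sup>2 / (2 * real (order G)))
           (\<lambda>k i. e k (s i) / complex_of_real (sqrt (real d))) i j i' j'
         = (if s i \<otimes> s j = s i' \<otimes> s j' then 1/2 else 0)"
proof -
  define r where "r = complex_of_real (sqrt (real d))"
  have r: "r * r = of_nat d" "cnj r = r" "of_nat d \<noteq> (0::complex)"
    unfolding r_def using d by (simp_all flip: of_real_mult)
  have scalar: "complex_of_real ((real d)\<^sup>2 / (2 * real (order G))) * (p / r * (q / r)) * cnj (p' / r * (q' / r))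
      = p * q * cnj (p' * q') / (2 * of_nat (order G))" for p q p' q'
    using r by (simp add: field_simps power2_eq_square)
  have "tensor_frame_entry (order G) (\<lambda>_. (real d)\<^sup>2 / (2 * real (order G))) (\<lambda>k i. e k (s i) / r) i j i' j'
      = (\<Sum>k<order G. e k (s i) * e k (s j) * cnj (e k (s i') * e k (s j'))) / (2 * of_nat (order G))"
    unfolding tensor_frame_entry_def scalar by (simp add: sum_divide_distrib)
  also have "\<dots> = (\<Sum>\<chi>\<in>characters G. \<chi> (s i) * \<chi> (s j) * cnj (\<chi> (s i') * \<chi> (s j')))
      / (2 * of_nat (order G))"
    using sum.reindex_bij_betw[OF e, of "\<lambda>\<chi>. \<chi> (s i) * \<chi> (s j) * cnj (\<chi> (s i') * \<chi> (s j'))"]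
    by simp
  also have "\<dots> = (if s i \<otimes> s j = s i' \<otimes> s j' then 1/2 else 0)"
    unfolding sum_characters_mult_cnj[OF s] using order_pos by simp
  finally show ?thesis unfolding r_def .
qed

lemma weighted_2design_of_sidon:
  assumes S: "sidon G S" "card S = d" and d: "0 < d"
  shows "\<exists>x. weighted_2design d (order G + d) x"
proof -
  define M where "M = order G"
  define r where "r = complex_of_real (sqrt (real d))"
  obtain e where e: "bij_betw e {..<M} (characters G)"
    using ex_bij_betw_nat_finite[OF finite_characters] unfolding M_def card_characters
    by (auto simp: atLeast0LessThan)
  have "finite S" using S(2) d card_ge_0_finite by blast
  then obtain s where s: "bij_betw s {..<d} S"
    using ex_bij_betw_nat_finite S(2) by (metis atLeast0LessThan)
  have sG: "s i \<in> carrier G" if "i < d" for i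
    using S(1) bij_betwE[OF s] that unfolding sidon_def by auto
  define x where "x k = (if k < M then (\<lambda>i. e k (s i) / r) else basis_vec (k - M))" for k
  define w where "w k = (if k < M then (real d)\<^sup>2 / (2 * real M) else 1/2)" for k
  have "weighted_2design d (M + d) x"
  proof (rule weighted_2designI)
    fix k assume k: "k < M + d"
    show "unit_vec d (x k)"
    proof (cases "k < M")
      case True
      then show ?thesis
        using unit_vec_character_vector[OF bij_betw_apply[OF e] sG d] by (simp add: x_def r_def)
    next
      case False
      then show ?thesis using k unit_vec_basis_vec by (simp add: x_def)
    qed
    show "0 \<le> w k" by (simp add: w_def)
  next
    fix i j i' j' assume ij: "i < d" "j < d" "i' < d" "j' < d"
    have "tensor_frame_entry M w x i j i' j'
        = tensor_frame_entry M (\<lambda>_. (real d)\<^sup>2 / (2 * real M)) (\<lambda>k i. e k (s i) / r) i j i' j'"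
      by (rule tensor_frame_entry_cong) (simp_all add: w_def x_def)
    also have "\<dots> = (if (i = i' \<and> j = j') \<or> (i = j' \<and> j = i') then 1/2 else 0)"
      using tensor_frame_entry_characters[OF e[unfolded M_def] d, of s i j i' j'] sG ij
        sidon_mult_eq_iff[OF S(1) bij_betw_imp_inj_on[OF s] equalityD1[OF bij_betw_imp_surj_on[OF s]]]
      unfolding M_def r_def by simp
    finally show "tensor_frame_entry (M + d) w x i j i' j' = sym_proj_entry i j i' j'"
      unfolding tensor_frame_entry_add sym_proj_entry_split
      using tensor_frame_entry_basis[OF ij(1)] by (simp add: w_def x_def)
  qed
  then show ?thesis unfolding M_def by blast
qed

end

lemma n_design_le: "weighted_2design d n x \<Longrightarrow> n_design d \<le> n"
  unfolding n_design_def by (rule Least_le) blast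

theorem mainTheorem2:
  fixes d :: nat
  shows "n_design d \<le> m_sidon d + d"
proof (cases "d = 0")
  case True
  have "weighted_2design 0 0 x" for x
    by (simp add: weighted_2design_def)
  then show ?thesis using True n_design_le by fastforce
next
  case False
  obtain G :: "nat monoid" and S where G: "comm_group G" "finite (carrier G)"
    "card (carrier G) = m_sidon d" and S: "sidon G S" "card S = d"
    using m_sidon_attained by blast
  interpret finite_comm_group G
    using G by (simp add: finite_comm_group_def finite_comm_group_axioms_def)
  obtain x where "weighted_2design d (order G + d) x"
    using weighted_2design_of_sidon[OF S] False by blast
  then show ?thesis
    using n_design_le G(3) unfolding order_def by fastforce
qed

end
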